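(* Let $G$ be a connected graph and let $e = \{a,b\}$ be a cut-edge of $G$. Let $G_a$ and $G_b$ be the connected components of $G$ with the edge $e$ removed (containing $a$ and $b$ respectively). Then for any minimal fort $F$ of $G$ with $a, b \notin F$, either $V(G_a) \cap F = \emptyset$ or $V(G_b) \cap F = \emptyset$.
   Context: A fort of a graph $G$ is a nonempty set $F\subseteq V(G)$ such that every vertex outside $F$ is adjacent to either zero or at least two vertices of $F$; it is minimal if no proper subset is a fort. *)

theory Defs
  imports Main
begin

definition graph :: "'a set \<Rightarrow> ('a \<Rightarrow> 'a \<Rightarrow> bool) \<Rightarrow> bool" where
  "graph V E \<longleftrightarrow> finite V \<and> (\<forall>u v. E u v \<longrightarrow> u \<in> V \<and> v \<in> V) \<and>
     (\<forall>u v. E u v \<longrightarrow> E v u) \<and> (\<forall>v. \<not> E v v)"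

definition reachable :: "'a set \<Rightarrow> ('a \<Rightarrow> 'a \<Rightarrow> bool) \<Rightarrow> 'a \<Rightarrow> 'a \<Rightarrow> bool" where
  "reachable V E u v \<longleftrightarrow> u \<in> V \<and> v \<in> V \<and> (\<lambda>x y. E x y \<and> x \<in> V \<and> y \<in> V)\<^sup>*\<^sup>* u v"

definition connected_graph :: "'a set \<Rightarrow> ('a \<Rightarrow> 'a \<Rightarrow> bool) \<Rightarrow> bool" where
  "connected_graph V E \<longleftrightarrow> V \<noteq> {} \<and> (\<forall>u\<in>V. \<forall>v\<in>V. reachable V E u v)"

definition component :: "'a set \<Rightarrow> ('a \<Rightarrow> 'a \<Rightarrow> bool) \<Rightarrow> 'a \<Rightarrow> 'a set" where
  "component V E v = {u. reachable V E v u}"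

definition remove_edge :: "('a \<Rightarrow> 'a \<Rightarrow> bool) \<Rightarrow> 'a \<Rightarrow> 'a \<Rightarrow> ('a \<Rightarrow> 'a \<Rightarrow> bool)" where
  "remove_edge E a b = (\<lambda>x y. E x y \<and> {x, y} \<noteq> {a, b})"

text \<open>{a,b} is a cut-edge: an edge whose removal increases the number of components,
  i.e. a and b are no longer connected.\<close>
definition cut_edge :: "'a set \<Rightarrow> ('a \<Rightarrow> 'a \<Rightarrow> bool) \<Rightarrow> 'a \<Rightarrow> 'a \<Rightarrow> bool" where
  "cut_edge V E a b \<longleftrightarrow> E a b \<and> \<not> reachable V (remove_edge E a b) a b"

definition neighbors :: "'a set \<Rightarrow> ('a \<Rightarrow> 'a \<Rightarrow> bool) \<Rightarrow> 'a \<Rightarrow> 'a set" where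
  "neighbors V E v = {u \<in> V. E v u}"

definition fort :: "'a set \<Rightarrow> ('a \<Rightarrow> 'a \<Rightarrow> bool) \<Rightarrow> 'a set \<Rightarrow> bool" where
  "fort V E F \<longleftrightarrow> F \<noteq> {} \<and> F \<subseteq> V \<and>
     (\<forall>v \<in> V - F. card (neighbors V E v \<inter> F) \<noteq> 1)"

definition minimal_fort :: "'a set \<Rightarrow> ('a \<Rightarrow> 'a \<Rightarrow> bool) \<Rightarrow> 'a set \<Rightarrow> bool" where
  "minimal_fort V E F \<longleftrightarrow> fort V E F \<and> (\<forall>F'. F' \<subset> F \<longrightarrow> \<not> fort V E F')"

end

theory Submission
  imports Defs
begin

text \<open>A fort F can be cut along any vertex set C that no edge ending in F crosses: then every
  vertex sees the same F-neighbours inside C as it sees in F (if it lies in C) or none at all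
  (if it does not), so F \<inter> C is again a fort. Removing the cut-edge ab, whose endpoints lie
  outside F, makes the component of a such a set, so a minimal fort lies entirely inside it or
  entirely outside it; and the components of a and b are disjoint.\<close>

lemma graph_remove_edge: "graph V E \<Longrightarrow> graph V (remove_edge E a b)"
  unfolding graph_def remove_edge_def by (auto simp: insert_commute)

lemma reachable_sym:
  assumes "graph V E" and "reachable V E u v"
  shows "reachable V E v u"
proof -
  let ?R = "\<lambda>x y. E x y \<and> x \<in> V \<and> y \<in> V"
  have "symp ?R"
    using assms(1) unfolding graph_def symp_def by blast
  moreover have "?R\<^sup>*\<^sup>* u v"
    using assms(2) unfolding reachable_def by blast
  ultimately have "?R\<^sup>*\<^sup>* v u"
    by (rule sympD[OF symp_rtranclp])
  then show ?thesis
    using assms(2) unfolding reachable_def by blast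
qed

lemma reachable_trans: "reachable V E u v \<Longrightarrow> reachable V E v w \<Longrightarrow> reachable V E u w"
  unfolding reachable_def by auto

lemma reachable_edge: "graph V E \<Longrightarrow> E u v \<Longrightarrow> reachable V E u v"
  unfolding graph_def reachable_def by auto

lemma component_edge_iff:
  assumes "graph V E" and "E u v"
  shows "u \<in> component V E w \<longleftrightarrow> v \<in> component V E w"
proof -
  have "reachable V E u v"
    using assms by (rule reachable_edge)
  moreover have "reachable V E v u"
    using assms(1) calculation by (rule reachable_sym)
  ultimately show ?thesis
    unfolding component_def
    using reachable_trans[of V E w u v] reachable_trans[of V E w v u] by blast
qed

lemma component_disjoint:
  assumes "graph V E" and "\<not> reachable V E a b"
  shows "component V E a \<inter> component V E b = {}"
proof -
  have False if "reachable V E a w" and "reachable V E b w" for w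
    using assms reachable_trans[OF that(1) reachable_sym[OF assms(1) that(2)]] by blast
  then show ?thesis
    unfolding component_def by blast
qed

lemma fort_Int:
  assumes fort: "fort V E F" and "F \<inter> C \<noteq> {}"
    and closed: "\<And>v u. E v u \<Longrightarrow> u \<in> F \<Longrightarrow> v \<in> C \<longleftrightarrow> u \<in> C"
  shows "fort V E (F \<inter> C)"
  unfolding fort_def
proof (intro conjI ballI)
  show "F \<inter> C \<noteq> {}" "F \<inter> C \<subseteq> V"
    using assms(2) fort unfolding fort_def by auto
next
  fix v assume v: "v \<in> V - F \<inter> C"
  show "card (neighbors V E v \<inter> (F \<inter> C)) \<noteq> 1"
  proof (cases "v \<in> C")
    case True
    then have "neighbors V E v \<inter> (F \<inter> C) = neighbors V E v \<inter> F"
      using closed unfolding neighbors_def by blast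
    moreover have "v \<in> V - F"
      using v True by blast
    ultimately show ?thesis
      using fort unfolding fort_def by auto
  next
    case False
    then have "neighbors V E v \<inter> (F \<inter> C) = {}"
      using closed unfolding neighbors_def by blast
    then show ?thesis by simp
  qed
qed

lemma minimal_fort_subset_or_disjoint:
  assumes minimal: "minimal_fort V E F"
    and closed: "\<And>v u. E v u \<Longrightarrow> u \<in> F \<Longrightarrow> v \<in> C \<longleftrightarrow> u \<in> C"
  shows "F \<subseteq> C \<or> F \<inter> C = {}"
proof (rule ccontr)
  assume "\<not> ?thesis"
  then have proper: "F \<inter> C \<subset> F" and nonempty: "F \<inter> C \<noteq> {}"
    by auto
  have "fort V E F"
    using minimal unfolding minimal_fort_def by simp
  then have "fort V E (F \<inter> C)"
    using nonempty closed by (rule fort_Int)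
  with proper minimal show False
    unfolding minimal_fort_def by blast
qed

theorem mainTheorem6:
  fixes V :: "'a set" and E :: "'a \<Rightarrow> 'a \<Rightarrow> bool" and a b :: 'a and F :: "'a set"
  assumes "graph V E"
    and "connected_graph V E"
    and "cut_edge V E a b"
    and "minimal_fort V E F"
    and "a \<notin> F" and "b \<notin> F"
  shows "component V (remove_edge E a b) a \<inter> F = {} \<or> component V (remove_edge E a b) b \<inter> F = {}"
proof -
  let ?E' = "remove_edge E a b"
  have graph': "graph V ?E'"
    using assms(1) by (rule graph_remove_edge)
  have "v \<in> component V ?E' a \<longleftrightarrow> u \<in> component V ?E' a" if "E v u" "u \<in> F" for v u
  proof -
    have "?E' v u"
      using that assms(5,6) unfolding remove_edge_def by (auto simp: doubleton_eq_iff)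
    then show ?thesis
      by (rule component_edge_iff[OF graph'])
  qed
  with assms(4) have "F \<subseteq> component V ?E' a \<or> F \<inter> component V ?E' a = {}"
    by (rule minimal_fort_subset_or_disjoint)
  moreover have "component V ?E' a \<inter> component V ?E' b = {}"
    using assms(3) unfolding cut_edge_def by (intro component_disjoint[OF graph']) simp
  ultimately show ?thesis
    by blast
qed

end
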